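(* Let $\ell\in\mathbb R^r$ be a generic length vector with positive, weakly increasing coordinates. If there is an $\ell$-long subset $J\subset[r]$ with $\#J=\mu(\ell)$, then $\ell$ is equivalent to the length vector $(0,\dots,0,1,\dots,1)$ whose last $2\mu(\ell)-1$ coordinates equal $1$ and whose first $r-2\mu(\ell)+1$ coordinates equal $0$.
   Context: $[r]=\{1,\dots,r\}$. A length vector $\ell\in\mathbb R^r$ is generic if $\sum_{j\in J}\ell_j\ne\sum_{j\notin J}\ell_j$ for every $J\subset[r]$; $J$ is $\ell$-long if $\sum_{j\in J}\ell_j>\sum_{j\notin J}\ell_j$ and $\ell$-short otherwise. Two generic length vectors are equivalent ($\sim$) if they have the same long (equivalently, short) subsets. $\sigma_\ell(J)=\#\{j\in J: J\setminus\{j\}\text{ is }\ell\text{-short}\}$ and $\mu(\ell)=\min\{\sigma_\ell(J): J\text{ }\ell\text{-long},\ \sigma_\ell(J)>0\}$. *)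

theory Defs
  imports Complex_Main
begin

text \<open>Length vectors in R^r are functions nat => real, only indices 1..r matter.\<close>

definition long_set :: "nat \<Rightarrow> (nat \<Rightarrow> real) \<Rightarrow> nat set \<Rightarrow> bool" where
  "long_set r l J \<longleftrightarrow> (\<Sum>j\<in>J. l j) > (\<Sum>j\<in>{1..r} - J. l j)"

definition short_set :: "nat \<Rightarrow> (nat \<Rightarrow> real) \<Rightarrow> nat set \<Rightarrow> bool" where
  "short_set r l J \<longleftrightarrow> \<not> long_set r l J"

definition generic :: "nat \<Rightarrow> (nat \<Rightarrow> real) \<Rightarrow> bool" where
  "generic r l \<longleftrightarrow> (\<forall>J. J \<subseteq> {1..r} \<longrightarrow> (\<Sum>j\<in>J. l j) \<noteq> (\<Sum>j\<in>{1..r} - J. l j))"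

definition equiv_lv :: "nat \<Rightarrow> (nat \<Rightarrow> real) \<Rightarrow> (nat \<Rightarrow> real) \<Rightarrow> bool" where
  "equiv_lv r l l' \<longleftrightarrow> generic r l \<and> generic r l' \<and>
     (\<forall>J. J \<subseteq> {1..r} \<longrightarrow> (long_set r l J \<longleftrightarrow> long_set r l' J))"

definition sigma_lv :: "nat \<Rightarrow> (nat \<Rightarrow> real) \<Rightarrow> nat set \<Rightarrow> nat" where
  "sigma_lv r l J = card {j \<in> J. short_set r l (J - {j})}"

definition mu_lv :: "nat \<Rightarrow> (nat \<Rightarrow> real) \<Rightarrow> nat" where
  "mu_lv r l = Min {sigma_lv r l J | J. J \<subseteq> {1..r} \<and> long_set r l J \<and> sigma_lv r l J > 0}"

text \<open>The vector (0,..,0,1,..,1) with last 2m-1 coordinates 1 and first r-2m+1 coordinates 0: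
  index i is 1 iff i >= r - 2m + 2.\<close>
definition zero_one_lv :: "nat \<Rightarrow> nat \<Rightarrow> (nat \<Rightarrow> real)" where
  "zero_one_lv r m = (\<lambda>i. if r + 2 \<le> i + 2 * m then 1 else 0)"

end

theory Submission
  imports Defs
begin

text \<open>Every long set has at least \<open>\<mu> = \<mu>(\<ell>)\<close> elements (a long set \<open>J\<close> from which no
  element can be dropped keeping it long has \<open>\<sigma>(J) = #J\<close>), and genericity then forces
  \<open>2\<mu> \<le> r + 1\<close>. Put \<open>a = r + 2 - 2\<mu>\<close> and \<open>T = {a..r}\<close>, so \<open>#T = 2\<mu> - 1\<close>. The top window
  \<open>{r+1-\<mu>..r}\<close> dominates the given long \<open>\<mu>\<close>-set, hence is long, and windows of length \<open>\<mu>\<close>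
  can be shifted down through \<open>T\<close> without becoming short. Once the bottom window
  \<open>{a..<a+\<mu>}\<close> is long, monotonicity makes every set meeting \<open>T\<close> in fewer than \<open>\<mu>\<close> points
  short, and complementation makes every set meeting \<open>T\<close> in at least \<open>\<mu>\<close> points long:
  this is exactly the long/short structure of \<open>(0,\<dots>,0,1,\<dots>,1)\<close>.\<close>

lemma sum_le_sum_top_interval:
  fixes l :: "nat \<Rightarrow> 'a::ordered_comm_monoid_add"
  assumes "mono_on {1..n} l" and "A \<subseteq> {1..n}"
  shows "sum l A \<le> sum l {n+1-card A..n}"
  using assms
proof (induction n arbitrary: A)
  case 0
  then show ?case by simp
next
  case (Suc n)
  have fin: "finite A" using Suc.prems(2) finite_subset by blast
  have mono_n: "mono_on {1..n} l" using Suc.prems(1) by (rule mono_on_subset) auto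
  show ?case
  proof (cases "Suc n \<in> A")
    case True
    have sub: "A - {Suc n} \<subseteq> {1..n}" using Suc.prems(2) by auto
    have card: "card (A - {Suc n}) = card A - 1" "1 \<le> card A" "card A \<le> Suc n"
      using True fin card_mono[OF _ Suc.prems(2)] by (auto simp: Suc_le_eq card_gt_0_iff)
    have "sum l A = l (Suc n) + sum l (A - {Suc n})" using True fin by (simp add: sum.remove)
    also have "\<dots> \<le> l (Suc n) + sum l {n+1-card (A - {Suc n})..n}"
      using Suc.IH[OF mono_n sub] by (rule add_left_mono)
    also have "\<dots> = sum l {Suc n+1-card A..Suc n}"
      using card by (simp add: atLeastAtMostSuc_conv Suc_diff_le)
    finally show ?thesis .
  next
    case False
    have sub: "A \<subseteq> {1..n}" using Suc.prems(2) False by (auto simp: le_Suc_eq)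
    have card: "card A \<le> n" using card_mono[OF _ sub] by simp
    have "sum l A \<le> sum l {n+1-card A..n}" using Suc.IH[OF mono_n sub] .
    also have "\<dots> \<le> (\<Sum>i = n+1-card A..n. l (Suc i))"
      using card by (intro sum_mono mono_onD[OF Suc.prems(1)]) auto
    also have "\<dots> = sum l {Suc n+1-card A..Suc n}"
      using card by (simp add: sum.shift_bounds_cl_Suc_ivl[symmetric] Suc_diff_le)
    finally show ?thesis .
  qed
qed

lemma long_set_iff:
  assumes "K \<subseteq> {1..r}"
  shows "long_set r l K \<longleftrightarrow> sum l {1..r} < 2 * sum l K"
proof -
  have "sum l ({1..r} - K) = sum l {1..r} - sum l K" using assms by (intro sum_diff) auto
  then show ?thesis unfolding long_set_def by linarith
qed

lemma long_set_sum_le: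
  assumes "long_set r l K" and "sum l K \<le> sum l K'"
    and "K \<subseteq> {1..r}" and "K' \<subseteq> {1..r}"
  shows "long_set r l K'"
  using assms long_set_iff[of K r l] long_set_iff[of K' r l] by auto

lemma generic_iff: "generic r l \<longleftrightarrow> (\<forall>K \<subseteq> {1..r}. 2 * sum l K \<noteq> sum l {1..r})"
proof -
  have "sum l K \<noteq> sum l ({1..r} - K) \<longleftrightarrow> 2 * sum l K \<noteq> sum l {1..r}" if "K \<subseteq> {1..r}" for K
  proof -
    have "sum l ({1..r} - K) = sum l {1..r} - sum l K" using that by (intro sum_diff) auto
    then show ?thesis by linarith
  qed
  then show ?thesis unfolding generic_def by blast
qed

locale generic_length_vector =
  fixes r :: nat and l :: "nat \<Rightarrow> real"
  assumes generic: "generic r l"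
    and nonneg: "\<And>i. i \<in> {1..r} \<Longrightarrow> 0 \<le> l i"
begin

lemma total_pos: "0 < sum l {1..r}"
proof -
  have "0 \<le> sum l {1..r}" by (intro sum_nonneg nonneg)
  moreover have "2 * sum l {1..r} \<noteq> sum l {1..r}"
    using generic unfolding generic_iff by blast
  ultimately show ?thesis by linarith
qed

lemma long_set_compl_iff:
  assumes "K \<subseteq> {1..r}"
  shows "long_set r l ({1..r} - K) \<longleftrightarrow> \<not> long_set r l K"
proof -
  have "sum l ({1..r} - K) = sum l {1..r} - sum l K" using assms by (intro sum_diff) auto
  moreover have "2 * sum l K \<noteq> sum l {1..r}" using generic assms by (simp add: generic_iff)
  ultimately show ?thesis using assms by (simp add: long_set_iff) linarith
qed

lemma long_set_nonempty: "long_set r l K \<Longrightarrow> K \<noteq> {}"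
  using total_pos by (auto simp: long_set_def)

lemma mu_le_sigma:
  assumes "K \<subseteq> {1..r}" and "long_set r l K" and "0 < sigma_lv r l K"
  shows "mu_lv r l \<le> sigma_lv r l K"
proof -
  have "finite {sigma_lv r l J | J. J \<subseteq> {1..r} \<and> long_set r l J \<and> 0 < sigma_lv r l J}"
    by (rule finite_subset[of _ "sigma_lv r l ` Pow {1..r}"]) auto
  then show ?thesis unfolding mu_lv_def using assms by (intro Min_le) auto
qed

lemma mu_le_card:
  assumes "K \<subseteq> {1..r}" and "long_set r l K"
  shows "mu_lv r l \<le> card K"
  using assms
proof (induction "card K" arbitrary: K rule: less_induct)
  case less
  have fin: "finite K" using less.prems(1) finite_subset by blast
  show ?case
  proof (cases "\<exists>j\<in>K. long_set r l (K - {j})")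
    case True
    then obtain j where j: "j \<in> K" "long_set r l (K - {j})" by blast
    have "mu_lv r l \<le> card (K - {j})"
      using less.hyps[OF card_Diff1_less[OF fin j(1)]] less.prems(1) j(2) by blast
    then show ?thesis using card_Diff1_le[of K j] by linarith
  next
    case False
    then have "{j \<in> K. short_set r l (K - {j})} = K" unfolding short_set_def by auto
    then have "sigma_lv r l K = card K" unfolding sigma_lv_def by simp
    moreover have "0 < card K" using fin long_set_nonempty[OF less.prems(2)] by auto
    ultimately show ?thesis using mu_le_sigma[OF less.prems] by simp
  qed
qed

lemma one_le_mu:
  assumes "J \<subseteq> {1..r}" and "long_set r l J" and "card J = mu_lv r l"
  shows "1 \<le> mu_lv r l"
proof -
  have "finite J" using assms(1) finite_subset by blast
  then have "0 < card J" using long_set_nonempty[OF assms(2)] by auto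
  then show ?thesis using assms(3) by simp
qed

lemma two_mu_le: "2 * mu_lv r l \<le> r + 1"
proof (rule ccontr)
  let ?m = "mu_lv r l"
  assume less: "\<not> 2 * ?m \<le> r + 1"
  have "long_set r l {1..r}" using total_pos by (simp add: long_set_iff)
  then have "?m \<le> r" using mu_le_card[of "{1..r}"] by simp
  then have A: "{1..?m - 1} \<subseteq> {1..r}" by auto
  have compl: "{1..r} - {1..?m - 1} = {?m..r}" using less by auto
  have "\<not> long_set r l {1..?m - 1}" using mu_le_card[OF A] less by fastforce
  moreover have "\<not> long_set r l ({1..r} - {1..?m - 1})"
    using mu_le_card[of "{?m..r}"] compl less by fastforce
  ultimately show False using long_set_compl_iff[OF A] by blast
qed

end

locale ordered_generic_length_vector = generic_length_vector +
  assumes mono: "mono_on {1..r} l"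
begin

lemma long_set_top_interval:
  assumes "K \<subseteq> {1..r}" and "long_set r l K"
  shows "long_set r l {r + 1 - card K..r}"
proof -
  have "card K \<le> r" using card_mono[OF _ assms(1)] by simp
  then have "{r + 1 - card K..r} \<subseteq> {1..r}" by auto
  then show ?thesis
    using long_set_sum_le[OF assms(2) sum_le_sum_top_interval[OF mono assms(1)] assms(1)] by blast
qed

text \<open>If \<open>{b..<b+w}\<close> were short, then
  \<open>Z = [r] - {b+1..<b+w}\<close> would be long with \<open>0 < \<sigma>(Z) < \<mu>\<close>; the elements of \<open>Z\<close>
  at most \<open>b\<close> do not count in \<open>\<sigma>(Z)\<close> by monotonicity, while \<open>b + w\<close> does.\<close>
lemma window_long_shift_down:
  assumes "1 \<le> b" and "b + w \<le> r" and "r + 1 < b + w + mu_lv r l"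
    and "long_set r l {Suc b..<Suc b + w}"
  shows "long_set r l {b..<b + w}"
proof (rule ccontr)
  assume short: "\<not> long_set r l {b..<b + w}"
  have "1 \<le> w" using long_set_nonempty[OF assms(4)] by auto
  define Z where "Z = {1..r} - {Suc b..<b + w}"
  have Z: "Z \<subseteq> {1..r}" "finite Z" "b \<in> Z" "b + w \<in> Z"
    using assms(1,2) unfolding Z_def by auto
  have "{b..<b + w} \<subseteq> {1..r}" using assms(1,2) by auto
  then have "long_set r l ({1..r} - {b..<b + w})" using long_set_compl_iff short by blast
  moreover have "Z - {b} = {1..r} - {b..<b + w}" using \<open>1 \<le> w\<close> by (auto simp: Z_def)
  ultimately have long_Z_b: "long_set r l (Z - {b})" by simp
  have "sum l (Z - {b}) \<le> sum l Z" using Z nonneg by (intro sum_mono2) auto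
  then have Z_long: "long_set r l Z" using long_set_sum_le[OF long_Z_b] Z(1) by blast
  have counted: "{j \<in> Z. short_set r l (Z - {j})} \<subseteq> {b + w..r}"
  proof
    fix j assume j: "j \<in> {j \<in> Z. short_set r l (Z - {j})}"
    show "j \<in> {b + w..r}"
    proof (rule ccontr)
      assume "j \<notin> {b + w..r}"
      then have "j \<le> b" "j \<in> {1..r}" using j by (auto simp: Z_def)
      moreover have "b \<in> {1..r}" using Z(1,3) by blast
      ultimately have "l j \<le> l b" by (intro mono_onD[OF mono])
      then have "sum l (Z - {b}) \<le> sum l (Z - {j})" using j Z by (simp add: sum_diff1)
      then have "long_set r l (Z - {j})" using long_set_sum_le[OF long_Z_b] Z(1) by blast
      then show False using j by (simp add: short_set_def)
    qed
  qed
  have "{Suc b..<Suc b + w} \<subseteq> {1..r}" using assms(2) by auto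
  then have "\<not> long_set r l ({1..r} - {Suc b..<Suc b + w})"
    using long_set_compl_iff assms(4) by blast
  moreover have "Z - {b + w} = {1..r} - {Suc b..<Suc b + w}"
    using \<open>1 \<le> w\<close> by (auto simp: Z_def)
  ultimately have "b + w \<in> {j \<in> Z. short_set r l (Z - {j})}"
    using Z(4) by (simp add: short_set_def)
  then have "0 < sigma_lv r l Z" using Z(2) by (auto simp: sigma_lv_def card_gt_0_iff)
  moreover have "sigma_lv r l Z \<le> r + 1 - (b + w)"
    unfolding sigma_lv_def using card_mono[OF _ counted] by simp
  ultimately show False using mu_le_sigma[OF Z(1) Z_long] assms(3) by linarith
qed

lemma bottom_window_long:
  assumes "J \<subseteq> {1..r}" and "long_set r l J" and "card J = mu_lv r l"
    and "a + 2 * mu_lv r l = r + 2"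
  shows "long_set r l {a..<a + mu_lv r l}"
proof -
  let ?m = "mu_lv r l"
  have "1 \<le> ?m" using one_le_mu[OF assms(1-3)] .
  have "2 * ?m \<le> r + 1" by (rule two_mu_le)
  then have "1 \<le> a" "a \<le> r + 1 - ?m" using assms(4) \<open>1 \<le> ?m\<close> by auto
  from \<open>a \<le> r + 1 - ?m\<close> show ?thesis
  proof (induction rule: inc_induct)
    case base
    have "{r + 1 - ?m..<r + 1 - ?m + ?m} = {r + 1 - card J..r}"
      using assms(3) \<open>1 \<le> ?m\<close> \<open>2 * ?m \<le> r + 1\<close> by auto
    then show ?case using long_set_top_interval[OF assms(1,2)] by simp
  next
    case (step b)
    then show ?case
      using window_long_shift_down[of b ?m] \<open>1 \<le> a\<close> assms(4) by auto
  qed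
qed

lemma short_if_card_tail_le:
  assumes "1 \<le> a" and "long_set r l {a..<a + w}"
    and "K \<subseteq> {1..r}" and "card (K \<inter> {a..r}) + a + w \<le> r + 1"
  shows "\<not> long_set r l K"
proof
  assume "long_set r l K"
  let ?T = "{a..r}"
  have fin: "finite K" using assms(3) finite_subset by blast
  have "sum l (K - ?T) \<le> sum l {1..<a}"
    using assms(3,4) by (intro sum_mono2 nonneg) auto
  moreover have "sum l (K \<inter> ?T) \<le> sum l {r + 1 - card (K \<inter> ?T)..r}"
    using assms(3) by (intro sum_le_sum_top_interval mono) auto
  moreover have "sum l {r + 1 - card (K \<inter> ?T)..r} \<le> sum l {a + w..r}"
    using assms(1,4) by (intro sum_mono2) (auto intro: nonneg)
  moreover have "sum l ({1..<a} \<union> {a + w..r}) = sum l {1..<a} + sum l {a + w..r}"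
    by (intro sum.union_disjoint) auto
  ultimately have "sum l K \<le> sum l ({1..<a} \<union> {a + w..r})"
    using sum.Int_Diff[OF fin, of l ?T] by linarith
  moreover have "{1..<a} \<union> {a + w..r} = {1..r} - {a..<a + w}" using assms(1,4) by auto
  ultimately have "long_set r l ({1..r} - {a..<a + w})"
    using long_set_sum_le[OF \<open>long_set r l K\<close>] assms(3) by auto
  moreover have "{a..<a + w} \<subseteq> {1..r}" using assms(1,4) by auto
  ultimately show False using long_set_compl_iff assms(2) by blast
qed

lemma long_set_iff_card_tail:
  assumes "J \<subseteq> {1..r}" and "long_set r l J" and "card J = mu_lv r l"
    and "K \<subseteq> {1..r}"
  shows "long_set r l K \<longleftrightarrow> mu_lv r l \<le> card (K \<inter> {r + 2 - 2 * mu_lv r l..r})"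
proof -
  let ?m = "mu_lv r l" and ?T = "{r + 2 - 2 * mu_lv r l..r}"
  have "1 \<le> ?m" using one_le_mu[OF assms(1-3)] .
  have "2 * ?m \<le> r + 1" by (rule two_mu_le)
  then have "(r + 2 - 2 * ?m) + 2 * ?m = r + 2" by simp
  note window = bottom_window_long[OF assms(1-3) this]
  have few_short: "\<not> long_set r l K'" if "K' \<subseteq> {1..r}" "card (K' \<inter> ?T) < ?m" for K'
    using short_if_card_tail_le[OF _ window that(1)] that(2) \<open>2 * ?m \<le> r + 1\<close> by auto
  show ?thesis
  proof
    assume "long_set r l K"
    then show "?m \<le> card (K \<inter> ?T)" using few_short[OF assms(4)] by fastforce
  next
    assume many: "?m \<le> card (K \<inter> ?T)"
    have "({1..r} - K) \<inter> ?T = ?T - K \<inter> ?T"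
      using \<open>2 * ?m \<le> r + 1\<close> by auto
    then have "card (({1..r} - K) \<inter> ?T) = card ?T - card (K \<inter> ?T)"
      by (simp add: card_Diff_subset)
    also have "card ?T = 2 * ?m - 1" using \<open>1 \<le> ?m\<close> \<open>2 * ?m \<le> r + 1\<close> by simp
    finally have "\<not> long_set r l ({1..r} - K)"
      using few_short[of "{1..r} - K"] many \<open>1 \<le> ?m\<close> by auto
    then show "long_set r l K" using long_set_compl_iff[OF assms(4)] by blast
  qed
qed

end

lemma sum_zero_one_lv:
  assumes "K \<subseteq> {1..r}"
  shows "sum (zero_one_lv r m) K = card (K \<inter> {r + 2 - 2 * m..r})"
proof -
  have "sum (zero_one_lv r m) K = card (K \<inter> {i. r + 2 \<le> i + 2 * m})"
    using finite_subset[OF assms] by (simp add: zero_one_lv_def sum.If_cases)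
  also have "K \<inter> {i. r + 2 \<le> i + 2 * m} = K \<inter> {r + 2 - 2 * m..r}" using assms by auto
  finally show ?thesis .
qed

lemma sum_zero_one_lv_total:
  assumes "2 * m \<le> r + 1"
  shows "sum (zero_one_lv r m) {1..r} = 2 * m - 1"
  using assms by (simp add: sum_zero_one_lv Int_absorb1)

lemma long_set_zero_one_lv_iff:
  assumes "1 \<le> m" and "2 * m \<le> r + 1" and "K \<subseteq> {1..r}"
  shows "long_set r (zero_one_lv r m) K \<longleftrightarrow> m \<le> card (K \<inter> {r + 2 - 2 * m..r})"
proof -
  let ?c = "card (K \<inter> {r + 2 - 2 * m..r})"
  have "long_set r (zero_one_lv r m) K \<longleftrightarrow> real (2 * m - 1) < 2 * real ?c"
    using assms(2,3) by (simp add: long_set_iff sum_zero_one_lv sum_zero_one_lv_total)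
  also have "\<dots> \<longleftrightarrow> 2 * m - 1 < 2 * ?c" by linarith
  also have "\<dots> \<longleftrightarrow> m \<le> ?c" using assms(1) by linarith
  finally show ?thesis .
qed

lemma generic_zero_one_lv:
  assumes "1 \<le> m" and "2 * m \<le> r + 1"
  shows "generic r (zero_one_lv r m)"
  unfolding generic_iff
proof (intro allI impI)
  fix K assume K: "K \<subseteq> {1..r}"
  let ?c = "card (K \<inter> {r + 2 - 2 * m..r})"
  have "2 * ?c \<noteq> 2 * m - 1" using assms(1) by presburger
  then have "2 * real ?c \<noteq> real (2 * m - 1)" by linarith
  then show "2 * sum (zero_one_lv r m) K \<noteq> sum (zero_one_lv r m) {1..r}"
    using K assms(2) by (simp add: sum_zero_one_lv sum_zero_one_lv_total)
qed

theorem lemma4p1: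
  fixes r :: nat and l :: "nat \<Rightarrow> real"
  assumes "generic r l"
    and "\<forall>i\<in>{1..r}. l i > 0"
    and "\<forall>i j. 1 \<le> i \<and> i \<le> j \<and> j \<le> r \<longrightarrow> l i \<le> l j"
    and "\<exists>J. J \<subseteq> {1..r} \<and> long_set r l J \<and> card J = mu_lv r l"
  shows "equiv_lv r l (zero_one_lv r (mu_lv r l))"
proof -
  interpret ordered_generic_length_vector r l
  proof
    show "generic r l" by (fact assms(1))
    show "0 \<le> l i" if "i \<in> {1..r}" for i using assms(2) that by (simp add: less_imp_le)
    show "mono_on {1..r} l" using assms(3) by (intro mono_onI) auto
  qed
  obtain J where J: "J \<subseteq> {1..r}" "long_set r l J" "card J = mu_lv r l" using assms(4) by blast
  from one_le_mu[OF J] show ?thesis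
    using assms(1) two_mu_le generic_zero_one_lv long_set_iff_card_tail[OF J]
      long_set_zero_one_lv_iff
    unfolding equiv_lv_def by simp
qed

end
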